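(* For every $n\geq 2$, the pair $(H_n,v)$ is neutral for the glue operator, where $H_n$ is the hanging split graph of size $n$ and $v$ is its distinguished clique vertex.
   Context: For $n\geq 2$, the hanging split graph $H_n$ consists of a clique on vertices $\{v,v_1,\ldots,v_{n-1}\}$, an independent set $\{u_1,\ldots,u_{n-1}\}$, and edges $u_iv_i$ for $1\le i\le n-1$ (so $H_2$ is the path on three vertices with $v$ an endpoint). The Maker-Breaker domination game on a graph: Dominator and Staller alternately choose a not-yet-chosen vertex (no passing), starting with all vertices unchosen; when all vertices are chosen, Dominator wins if his vertices form a dominating set of the graph, otherwise Staller wins. The outcome $o(\cdot)$ is $\mathcal D$ if Dominator has a winning strategy both as first and as second player, $\mathcal S$ if Staller has a winning strategy both as first and as second player, and $\mathcal N$ if the first player has a winning strategy. For disjoint graphs $G,H$ and vertices $u\in V(G)$, $v\in V(H)$, the glued graph $G\odot_{u,v}H$ is obtained from the disjoint union by identifying $u$ and $v$ into one new vertex $w$, adjacent to all former neighbors of $u$ in $G$ and of $v$ in $H$. The pair $(H,v)$ is neutral for the glue operator if for every graph $G$ and every vertex $u$ of $G$, $o(G\odot_{u,v}H)=o(G)$. *)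

theory Defs
  imports Main
begin

type_synonym 'a graph = "'a set \<times> ('a \<Rightarrow> 'a \<Rightarrow> bool)"

definition verts :: "'a graph \<Rightarrow> 'a set" where "verts G = fst G"
definition adj :: "'a graph \<Rightarrow> 'a \<Rightarrow> 'a \<Rightarrow> bool" where "adj G = snd G"

definition wf_graph :: "'a graph \<Rightarrow> bool" where
  "wf_graph G \<longleftrightarrow> finite (verts G)
     \<and> (\<forall>x y. adj G x y \<longrightarrow> x \<in> verts G \<and> y \<in> verts G)
     \<and> (\<forall>x y. adj G x y \<longrightarrow> adj G y x)
     \<and> (\<forall>x. \<not> adj G x x)"

definition dominating :: "'a graph \<Rightarrow> 'a set \<Rightarrow> bool" where
  "dominating G D \<longleftrightarrow> D \<subseteq> verts G \<and> (\<forall>x\<in>verts G. x \<in> D \<or> (\<exists>y\<in>D. adj G x y))"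

text \<open>dom_wins G D S t: in the position where Dominator has chosen D, Staller has chosen S,
  and it is Dominator's turn iff t, Dominator has a winning strategy.\<close>
inductive dom_wins :: "'a graph \<Rightarrow> 'a set \<Rightarrow> 'a set \<Rightarrow> bool \<Rightarrow> bool" for G where
  over: "verts G - (D \<union> S) = {} \<Longrightarrow> dominating G D \<Longrightarrow> dom_wins G D S t"
| dmove: "x \<in> verts G - (D \<union> S) \<Longrightarrow> dom_wins G (insert x D) S False \<Longrightarrow> dom_wins G D S True"
| smove: "verts G - (D \<union> S) \<noteq> {} \<Longrightarrow>
          (\<forall>x\<in>verts G - (D \<union> S). dom_wins G D (insert x S) True) \<Longrightarrow> dom_wins G D S False"

datatype outcome = OutD | OutS | OutN | OutP  (* OutP: second player wins; never occurs *)

definition outcome :: "'a graph \<Rightarrow> outcome" where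
  "outcome G = (let d1 = dom_wins G {} {} True; d2 = dom_wins G {} {} False in
     if d1 \<and> d2 then OutD
     else if \<not> d1 \<and> \<not> d2 then OutS
     else if d1 \<and> \<not> d2 then OutN
     else OutP)"

text \<open>G \<odot>_{u,v} H on vertex type 'a + 'b; the identified vertex w is Inl u.\<close>
definition glue :: "'a graph \<Rightarrow> 'a \<Rightarrow> 'b graph \<Rightarrow> 'b \<Rightarrow> ('a + 'b) graph" where
  "glue G u H v =
    (Inl ` verts G \<union> Inr ` (verts H - {v}),
     (\<lambda>p q. case (p, q) of
        (Inl x, Inl y) \<Rightarrow> adj G x y
      | (Inr x, Inr y) \<Rightarrow> x \<noteq> v \<and> y \<noteq> v \<and> adj H x y
      | (Inl x, Inr y) \<Rightarrow> x = u \<and> y \<noteq> v \<and> adj H v y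
      | (Inr x, Inl y) \<Rightarrow> y = u \<and> x \<noteq> v \<and> adj H x v))"

datatype hs_vertex = Vc | Vi nat | Ui nat

definition hanging_split :: "nat \<Rightarrow> hs_vertex graph" where
  "hanging_split n =
    ({Vc} \<union> Vi ` {1..n-1} \<union> Ui ` {1..n-1},
     (\<lambda>x y. case (x, y) of
        (Vc, Vi j) \<Rightarrow> j \<in> {1..n-1}
      | (Vi i, Vc) \<Rightarrow> i \<in> {1..n-1}
      | (Vi i, Vi j) \<Rightarrow> i \<in> {1..n-1} \<and> j \<in> {1..n-1} \<and> i \<noteq> j
      | (Vi i, Ui j) \<Rightarrow> i \<in> {1..n-1} \<and> i = j
      | (Ui i, Vi j) \<Rightarrow> i \<in> {1..n-1} \<and> i = j
      | _ \<Rightarrow> False))"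

end

theory Submission
  imports Defs
begin

text \<open>Gluing \<open>H\<^sub>n\<close> at \<open>v\<close> adds to \<open>G\<close> the pendant pairs \<open>{v\<^sub>i, u\<^sub>i}\<close>, where \<open>u\<^sub>i\<close> is a leaf
  at \<open>v\<^sub>i\<close> and every \<open>v\<^sub>i\<close> is adjacent to the glued vertex \<open>w = u\<close>.
  If Dominator wins on \<open>G\<close>, he wins on the glued graph by following his strategy on \<open>G\<close> and
  answering each Staller move in a pair by the other vertex of that pair.
  Conversely, when Staller claims a free \<open>v\<^sub>i\<close>, Dominator is forced to answer \<open>u\<^sub>i\<close>, as
  otherwise Staller also claims \<open>u\<^sub>i\<close> and it can no longer be dominated; once every pair is
  settled in this way, the game on the glued graph is the game on \<open>G\<close>.
  The one exception is an opening move of Dominator on some \<open>v\<^sub>j\<close>: it acts as claiming \<open>u\<close>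
  in \<open>G\<close>, and leaves \<open>w\<close> and \<open>u\<^sub>j\<close> as two spare vertices that are already dominated.\<close>

lemma dom_wins_staller_moveD:
  assumes "dom_wins \<Gamma> D S False" "x \<in> verts \<Gamma> - (D \<union> S)"
  shows "dom_wins \<Gamma> D (insert x S) True"
  using assms by (cases rule: dom_wins.cases) auto

lemma dom_wins_dominating_unclaimed:
  assumes "dom_wins \<Gamma> D S t"
  shows "dominating \<Gamma> (D \<union> (verts \<Gamma> - S))"
  using assms
proof (induction rule: dom_wins.induct)
  case (over D S t)
  then show ?case
    unfolding dominating_def by blast
next
  case (dmove x D S)
  then show ?case
    by (simp add: insert_absorb)
next
  case (smove D S)
  then obtain y where "y \<in> verts \<Gamma> - (D \<union> S)"
    by blast
  with smove.IH have "dominating \<Gamma> (D \<union> (verts \<Gamma> - insert y S))"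
    by blast
  then show ?case
    unfolding dominating_def by blast
qed

lemma staller_closed_nbhd_not_dom_wins:
  assumes "dom_wins \<Gamma> D S t" "z \<in> verts \<Gamma>" "insert z {y. adj \<Gamma> z y} \<subseteq> S - D"
  shows False
  using assms
proof (induction rule: dom_wins.induct)
  case (over D S t)
  then show ?case
    unfolding dominating_def by blast
next
  case (dmove x D S)
  then show ?case
    by blast
next
  case (smove D S)
  then obtain y where "y \<in> verts \<Gamma> - (D \<union> S)"
    by blast
  with smove show ?case
    by blast
qed

lemma dom_wins_forced_reply:
  assumes wins: "dom_wins \<Gamma> D S False"
    and free: "y \<in> verts \<Gamma> - (D \<union> S)" "z \<in> verts \<Gamma> - (D \<union> S)" "y \<noteq> z"
    and pendant: "\<And>w. adj \<Gamma> z w \<Longrightarrow> w = y"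
  shows "dom_wins \<Gamma> (insert z D) (insert y S) False"
proof -
  have "dom_wins \<Gamma> D (insert y S) True"
    using wins free(1) by (rule dom_wins_staller_moveD)
  then show ?thesis
  proof (cases rule: dom_wins.cases)
    case over
    then show ?thesis
      using free by blast
  next
    case (dmove x)
    show ?thesis
    proof (cases "x = z")
      case False
      with dmove free have "dom_wins \<Gamma> (insert x D) (insert z (insert y S)) True"
        by (blast intro: dom_wins_staller_moveD)
      moreover have "insert z {w. adj \<Gamma> z w} \<subseteq> insert z (insert y S) - insert x D"
        using False dmove(1) free pendant by blast
      ultimately show ?thesis
        using free(2) by (blast dest: staller_closed_nbhd_not_dom_wins)
    qed (use dmove in simp)
  qed simp
qed

lemma card_unclaimed_insert_less:
  assumes "finite (verts \<Gamma>)" "x \<in> verts \<Gamma> - (D \<union> S)"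
  shows "card (verts \<Gamma> - (insert x D \<union> S)) < card (verts \<Gamma> - (D \<union> S))"
    and "card (verts \<Gamma> - (D \<union> insert x S)) < card (verts \<Gamma> - (D \<union> S))"
proof -
  have "card (verts \<Gamma> - (D \<union> S) - {x}) < card (verts \<Gamma> - (D \<union> S))"
    using assms by (intro card_Diff1_less) auto
  moreover have "verts \<Gamma> - (insert x D \<union> S) = verts \<Gamma> - (D \<union> S) - {x}"
    and "verts \<Gamma> - (D \<union> insert x S) = verts \<Gamma> - (D \<union> S) - {x}"
    by blast+
  ultimately show "card (verts \<Gamma> - (insert x D \<union> S)) < card (verts \<Gamma> - (D \<union> S))"
    and "card (verts \<Gamma> - (D \<union> insert x S)) < card (verts \<Gamma> - (D \<union> S))"
    by simp_all
qed

definition pair_secured :: "'a set \<Rightarrow> 'a set \<Rightarrow> 'a set \<Rightarrow> bool" where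
  "pair_secured D S p \<longleftrightarrow> p \<inter> D \<noteq> {} \<or> p \<inter> (D \<union> S) = {}"

lemma pairs_secured_after_staller_move:
  assumes disj: "pairwise disjnt P" and two: "\<And>p. p \<in> P \<Longrightarrow> card p = 2"
    and secured: "\<forall>p\<in>P. pair_secured D S p" and x: "x \<notin> D"
  obtains q where "\<forall>p\<in>P. pair_secured D (insert x S) p \<or> (p = q \<and> p - (D \<union> insert x S) \<noteq> {})"
proof -
  obtain q where q: "\<forall>p\<in>P. x \<in> p \<longrightarrow> p = q"
  proof (cases "\<exists>q\<in>P. x \<in> q")
    case True
    then obtain q where "q \<in> P" "x \<in> q"
      by blast
    with disj have "\<forall>p\<in>P. x \<in> p \<longrightarrow> p = q"
      unfolding pairwise_def disjnt_def by blast
    then show ?thesis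
      by (rule that)
  qed (use that in blast)
  have "pair_secured D (insert x S) p \<or> (p = q \<and> p - (D \<union> insert x S) \<noteq> {})" if p: "p \<in> P" for p
  proof (cases "x \<in> p \<and> p \<inter> D = {}")
    case True
    then have "card (p - {x}) = 1"
      using two[OF p] by (simp add: card_Diff_singleton)
    then have "p - {x} \<noteq> {}"
      by (metis card.empty zero_neq_one)
    moreover have "p \<inter> (D \<union> S) = {}"
      using True p secured unfolding pair_secured_def by blast
    ultimately show ?thesis
      using True q p by blast
  next
    case False
    with p secured show ?thesis
      unfolding pair_secured_def by blast
  qed
  then show ?thesis
    by (intro that ballI)
qed

lemma pairs_secured_after_dominator_move:
  assumes free: "verts \<Gamma> - (D \<union> S) \<noteq> {}" and pairs_verts: "\<Union> P \<subseteq> verts \<Gamma>"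
    and secured: "\<forall>p\<in>P. pair_secured D S p \<or> (p = p0 \<and> p - (D \<union> S) \<noteq> {})"
  obtains x where "x \<in> verts \<Gamma> - (D \<union> S)" "\<forall>p\<in>P. pair_secured (insert x D) S p"
proof -
  obtain x where x: "x \<in> verts \<Gamma> - (D \<union> S)" "\<forall>p\<in>P. pair_secured D S p \<or> x \<in> p"
  proof (cases "\<forall>p\<in>P. pair_secured D S p")
    case True
    with free that show ?thesis
      by blast
  next
    case False
    with secured have "p0 \<in> P" "p0 - (D \<union> S) \<noteq> {}" "\<forall>q\<in>P. pair_secured D S q \<or> q = p0"
      by auto
    with pairs_verts that show ?thesis
      by blast
  qed
  then have "\<forall>p\<in>P. pair_secured (insert x D) S p"
    by (auto simp: pair_secured_def)
  with x(1) show ?thesis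
    by (rule that)
qed

text \<open>When Dominator is to move, the pair \<open>p0\<close> may be the one whose vertex Staller has just
  claimed; Dominator then answers inside it.\<close>

lemma pairing_strategy_wins:
  assumes fin: "finite (verts \<Gamma>)"
    and disj: "pairwise disjnt P"
    and two: "\<And>p. p \<in> P \<Longrightarrow> card p = 2"
    and pairs_verts: "\<Union> P \<subseteq> verts \<Gamma>"
    and dom: "\<And>X. X \<subseteq> verts \<Gamma> \<Longrightarrow> \<forall>p\<in>P. p \<inter> (D \<union> X) \<noteq> {} \<Longrightarrow> dominating \<Gamma> (D \<union> X)"
    and secured: "\<forall>p\<in>P. pair_secured D S p \<or> (t \<and> p = p0 \<and> p - (D \<union> S) \<noteq> {})"
  shows "dom_wins \<Gamma> D S t"
  using dom secured
proof (induction "card (verts \<Gamma> - (D \<union> S))" arbitrary: D S t p0 rule: less_induct)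
  case less
  consider "verts \<Gamma> - (D \<union> S) = {}" | "verts \<Gamma> - (D \<union> S) \<noteq> {}" "t" | "verts \<Gamma> - (D \<union> S) \<noteq> {}" "\<not> t"
    by blast
  then show ?case
  proof cases
    case 1
    have "p \<inter> D \<noteq> {}" if p: "p \<in> P" for p
    proof -
      have claimed: "p \<noteq> {}" "p - (D \<union> S) = {}"
        using two[OF p] pairs_verts p 1 by auto
      with less.prems(2) p have "pair_secured D S p"
        by blast
      with claimed show ?thesis
        unfolding pair_secured_def by blast
    qed
    then have "dominating \<Gamma> D"
      using less.prems(1)[of "{}"] by simp
    with 1 show ?thesis
      by (rule dom_wins.over)
  next
    case 2
    obtain x where x: "x \<in> verts \<Gamma> - (D \<union> S)" "\<forall>p\<in>P. pair_secured (insert x D) S p"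
      using pairs_secured_after_dominator_move[OF 2(1) pairs_verts] less.prems(2) 2(2) by metis
    have "dom_wins \<Gamma> (insert x D) S False"
    proof (rule less.hyps[OF card_unclaimed_insert_less(1)[OF fin x(1)]])
      show "dominating \<Gamma> (insert x D \<union> X)"
        if "X \<subseteq> verts \<Gamma>" "\<forall>p\<in>P. p \<inter> (insert x D \<union> X) \<noteq> {}" for X
        using less.prems(1)[of "insert x X"] that x(1) by auto
    qed (use x(2) in simp)
    with x(1) have "dom_wins \<Gamma> D S True"
      by (rule dom_wins.dmove)
    with 2 show ?thesis
      by simp
  next
    case 3
    have "dom_wins \<Gamma> D (insert x S) True" if x: "x \<in> verts \<Gamma> - (D \<union> S)" for x
    proof -
      have "\<forall>p\<in>P. pair_secured D S p"
        using less.prems(2) 3(2) by simp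
      moreover have "x \<notin> D"
        using x by blast
      ultimately obtain q where "\<forall>p\<in>P. pair_secured D (insert x S) p \<or> (p = q \<and> p - (D \<union> insert x S) \<noteq> {})"
        using pairs_secured_after_staller_move[OF disj two] by metis
      then have "\<forall>p\<in>P. pair_secured D (insert x S) p \<or> (True \<and> p = q \<and> p - (D \<union> insert x S) \<noteq> {})"
        by simp
      with less.prems(1) show ?thesis
        by (rule less.hyps[OF card_unclaimed_insert_less(2)[OF fin x]])
    qed
    with 3 show ?thesis
      by (auto intro: dom_wins.smove)
  qed
qed

locale glued_hanging_split =
  fixes G :: "'a graph" and u :: 'a and n :: nat
  assumes wf: "wf_graph G" and u_in: "u \<in> verts G"
begin

abbreviation GH :: "('a + hs_vertex) graph" where
  "GH \<equiv> glue G u (hanging_split n) Vc"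

abbreviation K :: "nat set" where
  "K \<equiv> {1..n-1}"

definition pendant_pair :: "nat \<Rightarrow> ('a + hs_vertex) set" where
  "pendant_pair i = {Inr (Vi i), Inr (Ui i)}"

abbreviation pendants :: "('a + hs_vertex) set" where
  "pendants \<equiv> \<Union> (pendant_pair ` K)"

lemma verts_GH: "verts GH = Inl ` verts G \<union> pendants"
proof -
  have "verts (hanging_split n) - {Vc} = Vi ` K \<union> Ui ` K"
    unfolding hanging_split_def verts_def by auto
  then show ?thesis
    unfolding glue_def verts_def pendant_pair_def by auto
qed

lemma finite_verts_GH: "finite (verts GH)"
  using wf unfolding verts_GH wf_graph_def pendant_pair_def by auto

lemma adj_GH_Inl_Inl [simp]: "adj GH (Inl x) (Inl y) = adj G x y"
  unfolding glue_def adj_def by simp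

lemma adj_GH_Inl_Inr: "adj GH (Inl x) (Inr h) \<Longrightarrow> x = u \<and> (\<exists>i. h = Vi i)"
  unfolding glue_def adj_def hanging_split_def by (cases h) auto

lemma adj_GH_Ui: "adj GH (Inr (Ui i)) q \<Longrightarrow> q = Inr (Vi i)"
  unfolding glue_def adj_def hanging_split_def by (cases q; cases "projr q") auto

lemma adj_GH_pendant_pair:
  "i \<in> K \<Longrightarrow> adj GH (Inr (Vi i)) (Inr (Ui i)) \<and> adj GH (Inr (Ui i)) (Inr (Vi i))"
  unfolding glue_def adj_def hanging_split_def by auto

lemma pendant_pair_unique: "x \<in> pendant_pair i \<Longrightarrow> x \<in> pendant_pair j \<Longrightarrow> i = j"
  unfolding pendant_pair_def by auto

lemma pendant_pairs_disjoint: "pairwise disjnt (pendant_pair ` K)"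
  unfolding pairwise_def disjnt_def using pendant_pair_unique by blast

lemma card_pendant_pair: "card (pendant_pair i) = 2"
  unfolding pendant_pair_def by simp

lemma pendant_pair_subset_verts: "i \<in> K \<Longrightarrow> pendant_pair i \<subseteq> verts GH"
  unfolding verts_GH by blast

lemma Inl_notin_pendant_pair [simp]: "Inl x \<notin> pendant_pair i"
  unfolding pendant_pair_def by auto

lemma dominating_GH:
  assumes "dominating G A" "D \<subseteq> verts GH" "Inl ` A \<subseteq> D" "\<forall>i\<in>K. pendant_pair i \<inter> D \<noteq> {}"
  shows "dominating GH D"
  unfolding dominating_def
proof (intro conjI ballI)
  show "D \<subseteq> verts GH"
    by fact
  fix x
  assume "x \<in> verts GH"
  then consider y where "x = Inl y" "y \<in> verts G" | i where "i \<in> K" "x \<in> pendant_pair i"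
    unfolding verts_GH by blast
  then show "x \<in> D \<or> (\<exists>y\<in>D. adj GH x y)"
  proof cases
    case (1 y)
    then show ?thesis
      using assms(1,3) unfolding dominating_def by fastforce
  next
    case (2 i)
    then show ?thesis
      using assms(4) adj_GH_pendant_pair[of i] unfolding pendant_pair_def by blast
  qed
qed

definition pairs_answered :: "('a + hs_vertex) set \<Rightarrow> ('a + hs_vertex) set \<Rightarrow> bool" where
  "pairs_answered DH SH \<longleftrightarrow> DH \<union> SH \<subseteq> pendants \<and>
     (\<forall>i\<in>K. pendant_pair i \<inter> (DH \<union> SH) = {}
       \<or> pendant_pair i \<inter> DH \<noteq> {} \<and> pendant_pair i \<subseteq> DH \<union> SH)"

lemma unclaimed_GH:
  assumes "DH \<union> SH \<subseteq> pendants"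
  shows "verts GH - ((Inl ` A \<union> DH) \<union> (Inl ` B \<union> SH))
    = Inl ` (verts G - (A \<union> B)) \<union> (pendants - (DH \<union> SH))"
  using assms unfolding verts_GH by auto

lemma pairs_answered_reply:
  assumes answered: "pairs_answered DH SH" and i: "i \<in> K" and f: "f \<in> pendant_pair i - (DH \<union> SH)"
  obtains f' where "f' \<in> pendant_pair i - (DH \<union> SH)" "f' \<noteq> f"
    "pairs_answered (insert f' DH) (insert f SH)"
proof -
  obtain f' where f': "pendant_pair i = {f, f'}" "f' \<noteq> f"
    using f unfolding pendant_pair_def by auto
  have free: "pendant_pair i \<inter> (DH \<union> SH) = {}"
    using answered i f unfolding pairs_answered_def by blast
  have "pairs_answered (insert f' DH) (insert f SH)"
    unfolding pairs_answered_def
  proof (intro conjI ballI)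
    show "insert f' DH \<union> insert f SH \<subseteq> pendants"
      using answered i f' unfolding pairs_answered_def by blast
    fix j
    assume j: "j \<in> K"
    show "pendant_pair j \<inter> (insert f' DH \<union> insert f SH) = {}
      \<or> pendant_pair j \<inter> insert f' DH \<noteq> {} \<and> pendant_pair j \<subseteq> insert f' DH \<union> insert f SH"
    proof (cases "j = i")
      case False
      then have "f \<notin> pendant_pair j" "f' \<notin> pendant_pair j"
        using f' pendant_pair_unique by blast+
      with answered j show ?thesis
        unfolding pairs_answered_def by blast
    qed (use f' in blast)
  qed
  moreover have "f' \<in> pendant_pair i - (DH \<union> SH)"
    using f' free by blast
  ultimately show ?thesis
    using f' that by blast
qed

lemma pairs_answered_secured:
  assumes "pairs_answered DH SH" "p \<in> pendant_pair ` K"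
  shows "pair_secured (Inl ` A \<union> DH) (Inl ` B \<union> SH) p"
proof -
  obtain i where i: "i \<in> K" "p = pendant_pair i"
    using assms(2) by blast
  have "p \<inter> (Inl ` A \<union> DH) = p \<inter> DH" "p \<inter> (Inl ` A \<union> DH \<union> (Inl ` B \<union> SH)) = p \<inter> (DH \<union> SH)"
    using i(2) by auto
  moreover have "p \<inter> (DH \<union> SH) = {} \<or> p \<inter> DH \<noteq> {}"
    using assms(1) i unfolding pairs_answered_def by blast
  ultimately show ?thesis
    unfolding pair_secured_def by argo
qed

lemma dom_wins_GH_if_finished:
  assumes "dominating G A" "pairs_answered DH SH"
  shows "dom_wins GH (Inl ` A \<union> DH) (Inl ` B \<union> SH) t"
proof (rule pairing_strategy_wins[OF finite_verts_GH pendant_pairs_disjoint])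
  show "card p = 2" if "p \<in> pendant_pair ` K" for p
    using that card_pendant_pair by blast
  show "\<Union> (pendant_pair ` K) \<subseteq> verts GH"
    using pendant_pair_subset_verts by blast
  have "Inl ` A \<union> DH \<subseteq> verts GH"
    using assms unfolding dominating_def pairs_answered_def verts_GH by blast
  then show "dominating GH (Inl ` A \<union> DH \<union> X)"
    if "X \<subseteq> verts GH" "\<forall>p\<in>pendant_pair ` K. p \<inter> (Inl ` A \<union> DH \<union> X) \<noteq> {}" for X
    using that by (intro dominating_GH[OF assms(1)]) auto
  show "\<forall>p\<in>pendant_pair ` K. pair_secured (Inl ` A \<union> DH) (Inl ` B \<union> SH) p \<or>
      (t \<and> p = {} \<and> p - (Inl ` A \<union> DH \<union> (Inl ` B \<union> SH)) \<noteq> {})"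
    using assms(2) pairs_answered_secured by simp
qed

lemma card_pendants_unclaimed_less:
  assumes "f \<in> pendants - (DH \<union> SH)"
  shows "card (pendants - (insert f' DH \<union> insert f SH)) < card (pendants - (DH \<union> SH))"
proof (rule psubset_card_mono)
  show "finite (pendants - (DH \<union> SH))"
    unfolding pendant_pair_def by simp
  show "pendants - (insert f' DH \<union> insert f SH) \<subset> pendants - (DH \<union> SH)"
    using assms by blast
qed

lemma dom_wins_GH_staller_to_move:
  assumes G_moves: "\<forall>y\<in>verts G - (A \<union> B). \<forall>DH SH. pairs_answered DH SH \<longrightarrow>
      dom_wins GH (Inl ` A \<union> DH) (Inl ` insert y B \<union> SH) True"
    and nonempty: "verts G - (A \<union> B) \<noteq> {}" and answered: "pairs_answered DH SH"
  shows "dom_wins GH (Inl ` A \<union> DH) (Inl ` B \<union> SH) False"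
  using answered
proof (induction "card (pendants - (DH \<union> SH))" arbitrary: DH SH rule: less_induct)
  case less
  let ?D = "Inl ` A \<union> DH" and ?S = "Inl ` B \<union> SH"
  have unclaimed: "verts GH - (?D \<union> ?S) = Inl ` (verts G - (A \<union> B)) \<union> (pendants - (DH \<union> SH))"
    using less.prems unfolding pairs_answered_def by (simp add: unclaimed_GH)
  have "dom_wins GH ?D (insert f ?S) True" if f: "f \<in> verts GH - (?D \<union> ?S)" for f
  proof -
    from f consider y where "f = Inl y" "y \<in> verts G - (A \<union> B)"
      | i where "i \<in> K" "f \<in> pendant_pair i - (DH \<union> SH)"
      unfolding unclaimed by blast
    then show ?thesis
    proof cases
      case (1 y)
      then show ?thesis
        using G_moves less.prems by simp
    next
      case (2 i)
      then obtain f' where f': "f' \<in> pendant_pair i - (DH \<union> SH)" "f' \<noteq> f"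
        "pairs_answered (insert f' DH) (insert f SH)"
        using pairs_answered_reply[OF less.prems] by blast
      have "dom_wins GH (Inl ` A \<union> insert f' DH) (Inl ` B \<union> insert f SH) False"
        using 2 f'(3) by (intro less.hyps card_pendants_unclaimed_less) auto
      moreover have "f' \<in> verts GH - (?D \<union> insert f ?S)"
        using 2 f' unclaimed by blast
      ultimately show ?thesis
        by (intro dom_wins.dmove) simp_all
    qed
  qed
  moreover have "verts GH - (?D \<union> ?S) \<noteq> {}"
    using nonempty unclaimed by blast
  ultimately show ?case
    by (intro dom_wins.smove) auto
qed

lemma dom_wins_GH_if_dom_wins:
  assumes "dom_wins G A B t" "pairs_answered DH SH"
  shows "dom_wins GH (Inl ` A \<union> DH) (Inl ` B \<union> SH) t"
  using assms
proof (induction arbitrary: DH SH rule: dom_wins.induct)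
  case (over A B t)
  then show ?case
    by (intro dom_wins_GH_if_finished)
next
  case (dmove x A B)
  have "Inl x \<in> verts GH - ((Inl ` A \<union> DH) \<union> (Inl ` B \<union> SH))"
    using dmove.hyps(1) dmove.prems unfolding pairs_answered_def by (simp add: unclaimed_GH)
  moreover have "dom_wins GH (insert (Inl x) (Inl ` A \<union> DH)) (Inl ` B \<union> SH) False"
    using dmove.IH[OF dmove.prems] by simp
  ultimately show ?case
    by (rule dom_wins.dmove)
next
  case (smove A B)
  then show ?case
    by (intro dom_wins_GH_staller_to_move) blast+
qed

lemma dom_wins_GH_forced_pendants:
  assumes "dom_wins GH D S False" "J \<subseteq> K" "\<forall>i\<in>J. pendant_pair i \<inter> (D \<union> S) = {}"
  shows "dom_wins GH (D \<union> Inr ` Ui ` J) (S \<union> Inr ` Vi ` J) False"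
proof -
  have "finite J"
    using assms(2) finite_subset by blast
  then show ?thesis
    using assms
  proof (induction J rule: finite_induct)
    case (insert i J)
    let ?D = "D \<union> Inr ` Ui ` J" and ?S = "S \<union> Inr ` Vi ` J"
    have "dom_wins GH ?D ?S False"
      using insert by blast
    moreover have "Inr (Vi i) \<in> verts GH - (?D \<union> ?S)" "Inr (Ui i) \<in> verts GH - (?D \<union> ?S)"
      using insert.prems(2,3) insert.hyps(2) unfolding verts_GH pendant_pair_def by auto
    ultimately have "dom_wins GH (insert (Inr (Ui i)) ?D) (insert (Inr (Vi i)) ?S) False"
      using adj_GH_Ui by (intro dom_wins_forced_reply) auto
    then show ?case
      by simp
  qed simp
qed

text \<open>The position \<open>(D', S', t)\<close> of the glued graph simulates the position \<open>(A, B, t')\<close> of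
  \<open>G\<close>. The set \<open>E\<close> holds unclaimed spare vertices without counterpart in \<open>G\<close>; they only occur
  after Dominator opened with \<open>v\<^sub>j\<close>, which counts as \<open>u \<in> A\<close>. Claiming a spare vertex wastes a
  tempo, which is why \<open>t'\<close> may differ from \<open>t\<close>.\<close>

definition spare :: "nat \<Rightarrow> ('a + hs_vertex) set" where
  "spare j = {Inl u, Inr (Ui j)}"

definition simulates ::
  "nat \<Rightarrow> ('a + hs_vertex) set \<Rightarrow> ('a + hs_vertex) set \<Rightarrow> bool \<Rightarrow>
    'a set \<Rightarrow> 'a set \<Rightarrow> bool \<Rightarrow> ('a + hs_vertex) set \<Rightarrow> bool" where
  "simulates j D' S' t A B t' E \<longleftrightarrow>
     verts GH - (D' \<union> S') = Inl ` (verts G - (A \<union> B)) \<union> E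
   \<and> E \<subseteq> spare j \<and> (E \<noteq> {} \<longrightarrow> u \<in> A)
   \<and> (\<forall>x. Inl x \<in> D' \<longrightarrow> x \<in> A) \<and> ((\<exists>i. Inr (Vi i) \<in> D') \<longrightarrow> u \<in> A)
   \<and> A \<subseteq> verts G
   \<and> ((E = {} \<or> E = spare j) \<and> t' = t \<or> (\<exists>p. E = {p} \<and> \<not> t \<and> t'))"

lemma dominating_if_simulates:
  assumes dom: "dominating GH (D' \<union> (verts GH - S'))" and sim: "simulates j D' S' t A B t' E"
    and finished: "verts G - (A \<union> B) = {}"
  shows "dominating G A"
  unfolding dominating_def
proof (intro conjI ballI)
  show "A \<subseteq> verts G"
    using sim unfolding simulates_def by blast
  fix x
  assume x: "x \<in> verts G"
  have "D' \<union> (verts GH - S') \<subseteq> D' \<union> E"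
    using sim finished unfolding simulates_def by blast
  moreover have "Inl x \<in> verts GH"
    using x unfolding verts_GH by blast
  ultimately obtain y where y: "y \<in> D' \<union> E" "y = Inl x \<or> adj GH (Inl x) y"
    using dom unfolding dominating_def by blast
  show "x \<in> A \<or> (\<exists>y\<in>A. adj G x y)"
  proof (cases y)
    case (Inl z)
    then have "z \<in> A"
      using y(1) sim unfolding simulates_def spare_def by blast
    then show ?thesis
      using y(2) Inl by auto
  next
    case (Inr h)
    then obtain i where "x = u" "h = Vi i"
      using y(2) adj_GH_Inl_Inr by blast
    then have "u \<in> A"
      using y(1) Inr sim unfolding simulates_def spare_def by blast
    then show ?thesis
      using \<open>x = u\<close> by blast
  qed
qed

lemma simulates_dominator_claims_spare:
  assumes "simulates j D' S' True A B True E" "x \<in> E"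
  shows "simulates j (insert x D') S' False A B True (E - {x})"
  using assms unfolding simulates_def by (auto simp: spare_def)

lemma simulates_dominator_claims_G_vertex:
  assumes sim: "simulates j D' S' True A B True E" and x: "x \<in> verts GH - (D' \<union> S')" "x \<notin> E"
  obtains y where "x = Inl y" "y \<in> verts G - (A \<union> B)"
    "simulates j (insert x D') S' False (insert y A) B False E"
proof -
  obtain y where y: "x = Inl y" "y \<in> verts G - (A \<union> B)"
    using sim x unfolding simulates_def by blast
  moreover have "simulates j (insert x D') S' False (insert y A) B False E"
    using sim x y unfolding simulates_def by auto
  ultimately show ?thesis
    by (rule that)
qed

lemma simulates_staller_claims_spare:
  assumes "simulates j D' S' False A B True {p}"
  shows "p \<in> verts GH - (D' \<union> S')" "simulates j D' (insert p S') True A B True {}"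
  using assms unfolding simulates_def by (auto simp: spare_def)

lemma simulates_staller_claims_G_vertex:
  assumes "simulates j D' S' False A B False E" "y \<in> verts G - (A \<union> B)"
  shows "Inl y \<in> verts GH - (D' \<union> S')" "simulates j D' (insert (Inl y) S') True A (insert y B) True E"
  using assms unfolding simulates_def by (auto simp: spare_def)

lemma dom_wins_if_simulates:
  assumes "dom_wins GH D' S' t" "simulates j D' S' t A B t' E"
  shows "dom_wins G A B t'"
  using assms
proof (induction arbitrary: A B t' E rule: dom_wins.induct)
  case (over D' S' t)
  have "dominating GH (D' \<union> (verts GH - S'))"
    using dom_wins_dominating_unclaimed[OF dom_wins.over[OF over.hyps]] .
  moreover have "verts G - (A \<union> B) = {}"
    using over.hyps(1) over.prems unfolding simulates_def by blast
  ultimately show ?case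
    using over.prems by (intro dom_wins.over dominating_if_simulates)
next
  case (dmove x D' S')
  have t': "t'" and sim: "simulates j D' S' True A B True E"
    using dmove.prems unfolding simulates_def by auto
  show ?case
  proof (cases "x \<in> E")
    case True
    with sim have "simulates j (insert x D') S' False A B True (E - {x})"
      by (rule simulates_dominator_claims_spare)
    with t' show ?thesis
      using dmove.IH by simp
  next
    case False
    with sim dmove.hyps(1) obtain y where y: "x = Inl y" "y \<in> verts G - (A \<union> B)"
      and "simulates j (insert x D') S' False (insert y A) B False E"
      by (rule simulates_dominator_claims_G_vertex)
    then have "dom_wins G (insert y A) B False"
      using dmove.IH by blast
    with y(2) t' show ?thesis
      by (simp add: dom_wins.dmove)
  qed
next
  case (smove D' S')
  from smove.prems consider (pass) p where "E = {p}" "t'" | (mirror) "\<not> t'"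
    unfolding simulates_def by auto
  then show ?case
  proof cases
    case (pass p)
    with smove.prems have "dom_wins G A B True"
      using smove.IH simulates_staller_claims_spare by simp blast
    with pass(2) show ?thesis
      by simp
  next
    case mirror
    with smove.prems have sim: "simulates j D' S' False A B False E"
      by simp
    show ?thesis
    proof (cases "verts G - (A \<union> B) = {}")
      case True
      have "dom_wins GH D' S' False"
        using smove.hyps(1) smove.IH by (blast intro: dom_wins.smove)
      then have "dominating G A"
        using sim True by (intro dominating_if_simulates dom_wins_dominating_unclaimed)
      with True mirror show ?thesis
        by (simp add: dom_wins.over)
    next
      case False
      have "dom_wins G A (insert y B) True" if "y \<in> verts G - (A \<union> B)" for y
        using simulates_staller_claims_G_vertex[OF sim that] smove.IH by blast
      with False mirror show ?thesis
        by (simp add: dom_wins.smove)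
    qed
  qed
qed

lemma dom_wins_if_GH_pendants_claimed:
  assumes "dom_wins GH (Inl ` A \<union> Inr ` Ui ` K) (Inr ` Vi ` K) t" "A \<subseteq> verts G"
  shows "dom_wins G A {} t"
proof (rule dom_wins_if_simulates[OF assms(1)])
  show "simulates 0 (Inl ` A \<union> Inr ` Ui ` K) (Inr ` Vi ` K) t A {} t {}"
    using assms(2) unfolding simulates_def verts_GH pendant_pair_def by auto
qed

lemma dom_wins_if_GH_Vi_claimed:
  assumes "j \<in> K"
    and "dom_wins GH (insert (Inr (Vi j)) (Inr ` Ui ` (K - {j}))) (Inr ` Vi ` (K - {j})) False"
  shows "dom_wins G {u} {} False"
proof (rule dom_wins_if_simulates[OF assms(2)])
  show "simulates j (insert (Inr (Vi j)) (Inr ` Ui ` (K - {j}))) (Inr ` Vi ` (K - {j})) False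
      {u} {} False (spare j)"
    using assms(1) u_in unfolding simulates_def verts_GH pendant_pair_def spare_def by auto
qed

lemma dom_wins_if_GH_first_move:
  assumes x: "x \<in> verts GH" and wins: "dom_wins GH {x} {} False"
  shows "dom_wins G {} {} True"
proof -
  from x consider y where "x = Inl y" "y \<in> verts G" | j where "j \<in> K" "x = Inr (Ui j)"
    | j where "j \<in> K" "x = Inr (Vi j)"
    unfolding verts_GH pendant_pair_def by blast
  then show ?thesis
  proof cases
    case (1 y)
    have "dom_wins GH ({x} \<union> Inr ` Ui ` K) ({} \<union> Inr ` Vi ` K) False"
      using 1 by (intro dom_wins_GH_forced_pendants[OF wins]) (auto simp: pendant_pair_def)
    then have "dom_wins G {y} {} False"
      using 1 by (intro dom_wins_if_GH_pendants_claimed) simp_all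
    then show ?thesis
      using 1 by (intro dom_wins.dmove[of y]) simp_all
  next
    case (2 j)
    have "dom_wins GH ({x} \<union> Inr ` Ui ` (K - {j})) ({} \<union> Inr ` Vi ` (K - {j})) False"
      using 2 by (intro dom_wins_GH_forced_pendants[OF wins]) (auto simp: pendant_pair_def)
    moreover have "{x} \<union> Inr ` Ui ` (K - {j}) = Inr ` Ui ` K"
      using 2 by auto
    ultimately have "dom_wins GH (Inr ` Ui ` K) (insert (Inr (Vi j)) (Inr ` Vi ` (K - {j}))) True"
      using 2 by (intro dom_wins_staller_moveD) (auto simp: verts_GH pendant_pair_def)
    moreover have "insert (Inr (Vi j)) (Inr ` Vi ` (K - {j})) = Inr ` Vi ` K"
      using 2 by auto
    ultimately have "dom_wins GH (Inl ` {} \<union> Inr ` Ui ` K) (Inr ` Vi ` K) True"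
      by (metis image_empty sup_bot.left_neutral)
    then show ?thesis
      by (rule dom_wins_if_GH_pendants_claimed) simp
  next
    case (3 j)
    have "dom_wins GH ({x} \<union> Inr ` Ui ` (K - {j})) ({} \<union> Inr ` Vi ` (K - {j})) False"
      using 3 by (intro dom_wins_GH_forced_pendants[OF wins]) (auto simp: pendant_pair_def)
    then have "dom_wins G {u} {} False"
      using 3 by (intro dom_wins_if_GH_Vi_claimed) simp_all
    then show ?thesis
      using u_in by (intro dom_wins.dmove[of u]) simp_all
  qed
qed

lemma dom_wins_if_GH_initial: "dom_wins GH {} {} t \<Longrightarrow> dom_wins G {} {} t"
proof (cases t)
  case False
  assume "dom_wins GH {} {} t"
  then have "dom_wins GH ({} \<union> Inr ` Ui ` K) ({} \<union> Inr ` Vi ` K) False"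
    using False by (intro dom_wins_GH_forced_pendants) auto
  then show ?thesis
    using dom_wins_if_GH_pendants_claimed[of "{}"] False by simp
next
  case True
  assume "dom_wins GH {} {} t"
  then show ?thesis
  proof (cases rule: dom_wins.cases)
    case over
    then show ?thesis
      using u_in unfolding verts_GH by blast
  next
    case (dmove x)
    then show ?thesis
      using True dom_wins_if_GH_first_move by simp
  qed (use True in simp)
qed

lemma dom_wins_GH_initial_iff: "dom_wins GH {} {} t \<longleftrightarrow> dom_wins G {} {} t"
proof
  show "dom_wins GH {} {} t \<Longrightarrow> dom_wins G {} {} t"
    by (rule dom_wins_if_GH_initial)
  show "dom_wins G {} {} t \<Longrightarrow> dom_wins GH {} {} t"
    using dom_wins_GH_if_dom_wins[of "{}" "{}" t "{}" "{}"] by (simp add: pairs_answered_def)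
qed

end

theorem proposition5:
  fixes n :: nat and G :: "'a graph" and u :: 'a
  assumes "n \<ge> 2" and "wf_graph G" and "u \<in> verts G"
  shows "outcome (glue G u (hanging_split n) Vc) = outcome G"
proof -
  interpret glued_hanging_split G u n
    using assms(2,3) by unfold_locales
  show ?thesis
    unfolding outcome_def by (simp add: dom_wins_GH_initial_iff)
qed

end
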